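(* Let $D$ be a strong nonseparable digraph, let $H$ be a strong nonseparable subdigraph of $D$, and let $P=(x_0,x_1,\ldots,x_{r-1},x_r)$ be an ear of $H$ in $D$ with length $l(P)=r\geq 2$. Suppose $H'=H\cup P$ has a kernel $N'$ and one of the following holds: (1) $x_0,x_r\in N'$; (2) $x_0\in N'$ and $x_r\notin N'$; (3) $x_0\notin N'$, $x_r\in N'$ and $l(P)$ is even; (4) $x_0,x_r\notin N'$ and $l(P)$ is odd. Then $H$ has a kernel.
   Context: All digraphs are finite, without loops or multiple arcs. Paths and cycles are directed; the length of a path is its number of arcs. A digraph is strong if for every ordered pair of vertices $x,y$ there is a directed path from $x$ to $y$; it is nonseparable if its underlying undirected graph is nonseparable (has no cut vertex). For a subdigraph $H$ of $D$, an ear of $H$ in $D$ is a directed path $(x_0,\ldots,x_r)$ in $D$ whose end vertices $x_0,x_r$ lie in $H$ and whose internal vertices $x_1,\ldots,x_{r-1}$ do not lie in $H$ (or a directed cycle with exactly one vertex $x_0=x_r$ in $H$). A kernel of a digraph is a set $N$ of vertices that is independent (no arc between two of its vertices) and absorbent (every vertex not in $N$ has an out-neighbour in $N$). *)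

theory Defs
  imports Main
begin

definition digraph :: "'a set \<Rightarrow> ('a \<times> 'a) set \<Rightarrow> bool" where
  "digraph V A \<longleftrightarrow> finite V \<and> A \<subseteq> V \<times> V \<and> (\<forall>x. (x, x) \<notin> A)"

definition subdigraph :: "'a set \<Rightarrow> ('a \<times> 'a) set \<Rightarrow> 'a set \<Rightarrow> ('a \<times> 'a) set \<Rightarrow> bool" where
  "subdigraph W B V A \<longleftrightarrow> digraph W B \<and> W \<subseteq> V \<and> B \<subseteq> A"

definition strong :: "'a set \<Rightarrow> ('a \<times> 'a) set \<Rightarrow> bool" where
  "strong V A \<longleftrightarrow> (\<forall>x\<in>V. \<forall>y\<in>V. (x, y) \<in> (Restr A V)\<^sup>*)"

definition und_connected :: "'a set \<Rightarrow> ('a \<times> 'a) set \<Rightarrow> bool" where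
  "und_connected W A \<longleftrightarrow> (\<forall>x\<in>W. \<forall>y\<in>W. (x, y) \<in> (Restr (A \<union> A\<inverse>) W)\<^sup>*)"

definition nonseparable :: "'a set \<Rightarrow> ('a \<times> 'a) set \<Rightarrow> bool" where
  "nonseparable V A \<longleftrightarrow> und_connected V A \<and> (\<forall>v\<in>V. und_connected (V - {v}) A)"

definition path_arcs :: "'a list \<Rightarrow> ('a \<times> 'a) set" where
  "path_arcs xs = {(xs ! i, xs ! Suc i) | i. Suc i < length xs}"

text \<open>An ear of H=(W,B) in D=(V,A): a directed path x_0..x_r in D (or a cycle with
  x_0 = x_r) whose ends lie in H and internal vertices lie outside H.
  The list xs is (x_0,...,x_r), so its length l(P) = r = length xs - 1.\<close>
definition ear :: "'a list \<Rightarrow> 'a set \<Rightarrow> ('a \<times> 'a) set \<Rightarrow> 'a set \<Rightarrow> ('a \<times> 'a) set \<Rightarrow> bool" where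
  "ear xs W B V A \<longleftrightarrow> length xs \<ge> 2 \<and> set xs \<subseteq> V \<and> path_arcs xs \<subseteq> A
     \<and> distinct (butlast xs) \<and> distinct (tl xs)
     \<and> hd xs \<in> W \<and> last xs \<in> W
     \<and> (\<forall>i. 0 < i \<and> i < length xs - 1 \<longrightarrow> xs ! i \<notin> W)"

definition kernel :: "'a set \<Rightarrow> ('a \<times> 'a) set \<Rightarrow> 'a set \<Rightarrow> bool" where
  "kernel V A N \<longleftrightarrow> N \<subseteq> V \<and> (\<forall>x\<in>N. \<forall>y\<in>N. (x, y) \<notin> A)
     \<and> (\<forall>v\<in>V - N. \<exists>u\<in>N. (v, u) \<in> A)"

definition has_kernel :: "'a set \<Rightarrow> ('a \<times> 'a) set \<Rightarrow> bool" where
  "has_kernel V A \<longleftrightarrow> (\<exists>N. kernel V A N)"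

end

theory Submission
  imports Defs
begin

text \<open>An internal vertex x_i of the ear has x_(i+1) as its only out-neighbour in
  H \<union> P, so a kernel N of H \<union> P alternates along the interior of P: x_i \<in> N iff
  x_(i+1) \<notin> N. Hence N \<inter> W is a kernel of H unless x_0 \<notin> N is absorbed only by
  x_1 \<in> N, and each of the four conditions rules this out by the parity of r.\<close>

lemma ear_interior_out_arc:
  assumes "ear xs W B V A" and "B \<subseteq> W \<times> W"
    and "0 < i" and "i < length xs - 1"
    and "(xs ! i, u) \<in> B \<union> path_arcs xs"
  shows "u = xs ! Suc i"
proof -
  have "xs ! i \<notin> W" using assms(1,3,4) unfolding ear_def by blast
  then have "(xs ! i, u) \<in> path_arcs xs" using assms(2,5) by blast
  then obtain j where j: "Suc j < length xs" "xs ! i = xs ! j" "u = xs ! Suc j"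
    unfolding path_arcs_def by blast
  have "butlast xs ! i = butlast xs ! j"
    using j(1,2) assms(4) by (simp add: nth_butlast)
  moreover have "distinct (butlast xs)" using assms(1) unfolding ear_def by blast
  ultimately have "j = i" using j(1) assms(4) by (simp add: nth_eq_iff_index_eq)
  then show ?thesis using j(3) by simp
qed

lemma kernel_ear_interior_alternates:
  assumes N: "kernel (W \<union> set xs) (B \<union> path_arcs xs) N"
    and ear: "ear xs W B V A" and "B \<subseteq> W \<times> W"
    and i: "0 < i" "i < length xs - 1"
  shows "xs ! i \<in> N \<longleftrightarrow> xs ! Suc i \<notin> N"
proof
  have "(xs ! i, xs ! Suc i) \<in> path_arcs xs" using i(2) unfolding path_arcs_def by auto
  moreover assume "xs ! i \<in> N"
  ultimately show "xs ! Suc i \<notin> N" using N unfolding kernel_def by blast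
next
  assume succ: "xs ! Suc i \<notin> N"
  show "xs ! i \<in> N"
  proof (rule ccontr)
    assume "xs ! i \<notin> N"
    moreover have "xs ! i \<in> set xs" using i(2) by simp
    ultimately obtain u where "u \<in> N" "(xs ! i, u) \<in> B \<union> path_arcs xs"
      using N unfolding kernel_def by blast
    then show False
      using ear_interior_out_arc[OF ear \<open>B \<subseteq> W \<times> W\<close> i] succ by blast
  qed
qed

lemma kernel_ear_parity:
  assumes N: "kernel (W \<union> set xs) (B \<union> path_arcs xs) N"
    and ear: "ear xs W B V A" and "B \<subseteq> W \<times> W"
    and "0 < i" and "i \<le> length xs - 1"
  shows "xs ! i \<in> N \<longleftrightarrow> (last xs \<in> N \<longleftrightarrow> even (length xs - 1 - i))"
  using \<open>i \<le> length xs - 1\<close>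
proof (induction i rule: inc_induct)
  case base
  have "xs \<noteq> []" using ear unfolding ear_def by auto
  then show ?case by (simp add: last_conv_nth)
next
  case (step n)
  have "xs ! n \<in> N \<longleftrightarrow> xs ! Suc n \<notin> N"
    using kernel_ear_interior_alternates[OF N ear \<open>B \<subseteq> W \<times> W\<close>] step.hyps \<open>0 < i\<close>
    by simp
  moreover have "length xs - 1 - n = Suc (length xs - 1 - Suc n)" using step.hyps(2) by simp
  ultimately show ?case using step.IH by simp
qed

lemma kernel_Int_ear_base:
  assumes N: "kernel (W \<union> set xs) (B \<union> path_arcs xs) N"
    and ear: "ear xs W B V A" and BW: "B \<subseteq> W \<times> W"
    and start: "hd xs \<in> N \<or> xs ! 1 \<notin> N"
  shows "kernel W B (N \<inter> W)"
  unfolding kernel_def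
proof (intro conjI ballI)
  show "N \<inter> W \<subseteq> W" by blast
next
  fix x y assume "x \<in> N \<inter> W" "y \<in> N \<inter> W"
  then show "(x, y) \<notin> B" using N unfolding kernel_def by blast
next
  fix v assume v: "v \<in> W - N \<inter> W"
  then obtain u where u: "u \<in> N" "(v, u) \<in> B \<union> path_arcs xs"
    using N unfolding kernel_def by blast
  show "\<exists>u\<in>N \<inter> W. (v, u) \<in> B"
  proof (cases "(v, u) \<in> B")
    case True
    then show ?thesis using u(1) BW by blast
  next
    case False
    then obtain j where j: "Suc j < length xs" "v = xs ! j" "u = xs ! Suc j"
      using u(2) unfolding path_arcs_def by blast
    have "j = 0"
    proof (rule ccontr)
      assume "j \<noteq> 0"
      then have "xs ! j \<notin> W" using ear j(1) unfolding ear_def by auto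
      then show False using j(2) v by blast
    qed
    moreover have "xs \<noteq> []" using j(1) by auto
    ultimately have "v = hd xs" "u = xs ! 1" using j by (auto simp: hd_conv_nth)
    then show ?thesis using start u(1) v by blast
  qed
qed

theorem mainTheorem4:
  fixes V W :: "'a set" and A B :: "('a \<times> 'a) set" and xs :: "'a list" and N' :: "'a set"
  assumes "digraph V A" and "strong V A" and "nonseparable V A"
    and "subdigraph W B V A" and "strong W B" and "nonseparable W B"
    and "ear xs W B V A"
    and "length xs - 1 \<ge> 2"
    and "kernel (W \<union> set xs) (B \<union> path_arcs xs) N'"
    and "(hd xs \<in> N' \<and> last xs \<in> N')
       \<or> (hd xs \<in> N' \<and> last xs \<notin> N')
       \<or> (hd xs \<notin> N' \<and> last xs \<in> N' \<and> even (length xs - 1))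
       \<or> (hd xs \<notin> N' \<and> last xs \<notin> N' \<and> odd (length xs - 1))"
  shows "has_kernel W B"
proof -
  have BW: "B \<subseteq> W \<times> W" using assms(4) unfolding subdigraph_def digraph_def by blast
  have "length xs \<ge> 2" using assms(7) unfolding ear_def by blast
  then have "xs ! 1 \<in> N' \<longleftrightarrow> (last xs \<in> N' \<longleftrightarrow> odd (length xs - 1))"
    using kernel_ear_parity[OF assms(9,7) BW, of 1] by auto
  then have "hd xs \<in> N' \<or> xs ! 1 \<notin> N'" using assms(10) by auto
  then have "kernel W B (N' \<inter> W)" using kernel_Int_ear_base[OF assms(9,7) BW] by blast
  then show ?thesis unfolding has_kernel_def by blast
qed

end
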